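(* Let $\Omega\subset\mathbb{R}^N$ ($N\ge2$) be a bounded smooth domain, $1<q<2<p$, $a,b\in C^\alpha(\overline\Omega)$, and assume that $\Omega^a_+$ and $\Omega^a_-$ are subdomains of $\Omega$ with smooth boundary such that $\overline{\Omega^a_+}\subset\Omega$ and $\overline{\Omega^a_+}\cup\Omega^a_-=\Omega$. Let $\Lambda>0$, and suppose there exists $C_1>0$ such that $\|u\|_{C(\overline{\Omega^a_+})}\le C_1$ for all nontrivial non-negative solutions $u$ of $(P_{\lambda,\epsilon})$ with $\lambda\in[0,\Lambda]$ and $\epsilon\in(0,1]$. Then there exists $C_2>0$ such that $\|u\|_{C(\overline\Omega)}\le C_2$ for all nontrivial non-negative solutions $u$ of $(P_{\lambda,\epsilon})$ with $\lambda\in[0,\Lambda]$ and $\epsilon\in(0,1]$.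
   Context: $(P_{\lambda,\epsilon})$: $-\Delta u=\lambda(b(x)-\epsilon)|u+\epsilon|^{q-2}u+a(x)|u|^{p-2}u$ in $\Omega$, $\frac{\partial u}{\partial\mathbf{n}}=0$ on $\partial\Omega$. $\Omega^a_\pm=\{x\in\Omega:a(x)\gtrless0\}$; a subdomain is a connected open subset. *)

theory Defs
  imports "HOL-Analysis.Analysis"
begin

definition pd :: "'n::finite \<Rightarrow> (real^'n \<Rightarrow> real) \<Rightarrow> real^'n \<Rightarrow> real" where
  "pd i f x = deriv (\<lambda>t. f (x + t *\<^sub>R axis i 1)) 0"

primrec Ck_on :: "nat \<Rightarrow> (real^'n::finite) set \<Rightarrow> (real^'n \<Rightarrow> real) \<Rightarrow> bool" where
  "Ck_on 0 U f = continuous_on U f"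
| "Ck_on (Suc k) U f = (continuous_on U f \<and>
     (\<forall>x\<in>U. \<forall>i. (\<lambda>t. f (x + t *\<^sub>R axis i 1)) differentiable (at 0)) \<and>
     (\<forall>i. Ck_on k U (pd i f)))"

definition smooth_on :: "(real^'n::finite) set \<Rightarrow> (real^'n \<Rightarrow> real) \<Rightarrow> bool" where
  "smooth_on U f = (\<forall>k. Ck_on k U f)"

definition grad :: "(real^'n::finite \<Rightarrow> real) \<Rightarrow> real^'n \<Rightarrow> real^'n" where
  "grad f x = (\<chi> i. pd i f x)"

definition laplacian :: "(real^'n::finite \<Rightarrow> real) \<Rightarrow> real^'n \<Rightarrow> real" where
  "laplacian f x = (\<Sum>i\<in>UNIV. pd i (pd i f) x)"

definition defining_function :: "(real^'n::finite) set \<Rightarrow> (real^'n \<Rightarrow> real) \<Rightarrow> bool" where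
  "defining_function \<Omega> \<rho> = (smooth_on UNIV \<rho> \<and> \<Omega> = {x. \<rho> x < 0} \<and>
      frontier \<Omega> = {x. \<rho> x = 0} \<and> (\<forall>x\<in>frontier \<Omega>. grad \<rho> x \<noteq> 0))"

definition smooth_bounded_domain :: "(real^'n::finite) set \<Rightarrow> bool" where
  "smooth_bounded_domain \<Omega> = (open \<Omega> \<and> connected \<Omega> \<and> \<Omega> \<noteq> {} \<and> bounded \<Omega> \<and>
      (\<exists>\<rho>. defining_function \<Omega> \<rho>))"

definition outward_normal :: "(real^'n::finite) set \<Rightarrow> real^'n \<Rightarrow> real^'n" where
  "outward_normal \<Omega> x = (let \<rho> = (SOME \<rho>. defining_function \<Omega> \<rho>) in
      (1 / norm (grad \<rho> x)) *\<^sub>R grad \<rho> x)"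

definition normal_derivative :: "(real^'n::finite) set \<Rightarrow> (real^'n \<Rightarrow> real) \<Rightarrow> real^'n \<Rightarrow> real" where
  "normal_derivative \<Omega> u x = grad u x \<bullet> outward_normal \<Omega> x"

definition holder_on :: "real \<Rightarrow> (real^'n::finite) set \<Rightarrow> (real^'n \<Rightarrow> real) \<Rightarrow> bool" where
  "holder_on \<alpha> S f = (bounded (f ` S) \<and>
      (\<exists>H. \<forall>x\<in>S. \<forall>y\<in>S. \<bar>f x - f y\<bar> \<le> H * dist x y powr \<alpha>))"

(* classical solution u \<in> C^2(\<Omega>) \<inter> C^1(closure \<Omega>) of (P_{\<lambda>,\<epsilon>}) with Neumann condition *)
definition is_solution :: "(real^'n::finite) set \<Rightarrow> (real^'n \<Rightarrow> real) \<Rightarrow> (real^'n \<Rightarrow> real) \<Rightarrow>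
    real \<Rightarrow> real \<Rightarrow> real \<Rightarrow> real \<Rightarrow> (real^'n \<Rightarrow> real) \<Rightarrow> bool" where
  "is_solution \<Omega> a b p q lam \<epsilon> u = (
     Ck_on 2 \<Omega> u \<and> (\<exists>U. open U \<and> closure \<Omega> \<subseteq> U \<and> Ck_on 1 U u) \<and>
     (\<forall>x\<in>\<Omega>. - laplacian u x =
         lam * (b x - \<epsilon>) * \<bar>u x + \<epsilon>\<bar> powr (q - 2) * u x + a x * \<bar>u x\<bar> powr (p - 2) * u x) \<and>
     (\<forall>x\<in>frontier \<Omega>. normal_derivative \<Omega> u x = 0))"

definition nontrivial_nonneg_solution :: "(real^'n::finite) set \<Rightarrow> (real^'n \<Rightarrow> real) \<Rightarrow> (real^'n \<Rightarrow> real) \<Rightarrow>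
    real \<Rightarrow> real \<Rightarrow> real \<Rightarrow> real \<Rightarrow> (real^'n \<Rightarrow> real) \<Rightarrow> bool" where
  "nontrivial_nonneg_solution \<Omega> a b p q lam \<epsilon> u = (is_solution \<Omega> a b p q lam \<epsilon> u \<and>
     (\<forall>x\<in>closure \<Omega>. u x \<ge> 0) \<and> (\<exists>x\<in>\<Omega>. u x \<noteq> 0))"

end

theory Submission
  imports Defs
begin

text \<open>
  Compare a solution u with the barrier w = A - exp (- j * \<tau>), where \<tau> is a defining function of
  the region {a < 0}, and let x0 maximise u / w on the closure of \<Omega>, with value t.
  On the closure of {a > 0} the hypothesis bounds u.
  The boundary of \<Omega> lies in the boundary of {a < 0}, where the outward normals \<nabla>\<rho> and \<nabla>\<tau> make an
  acute angle; as \<partial>u/\<partial>n = 0 while w decreases strictly inwards, u - t w would increase into \<Omega>, so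
  x0 is not on the boundary.
  At a point of {a < 0} the maximum principle gives \<Delta>u \<le> t \<Delta>w, and the equation turns this into
  a bound on u: near the boundary of {a < 0}, where \<bar>\<nabla>\<tau>\<bar> is bounded below, a large j makes
  w uniformly superharmonic and the sublinear term (q < 2) loses; elsewhere a \<le> -\<delta> < 0 and the
  superlinear absorption (p > 2) wins.
\<close>

lemma holder_on_imp_continuous_on:
  assumes "holder_on \<alpha> S f" "0 < \<alpha>"
  shows "continuous_on S f"
  unfolding continuous_on_def
proof
  fix x assume "x \<in> S"
  obtain H where H: "\<forall>x\<in>S. \<forall>y\<in>S. \<bar>f x - f y\<bar> \<le> H * dist x y powr \<alpha>"
    using assms(1) unfolding holder_on_def by blast
  have "((\<lambda>y. dist y x) \<longlongrightarrow> dist x x) (at x within S)"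
    by (rule tendsto_dist[OF tendsto_ident_at tendsto_const])
  then have "((\<lambda>y. H * dist y x powr \<alpha>) \<longlongrightarrow> 0) (at x within S)"
    using assms(2) by (intro tendsto_mult_right_zero tendsto_zero_powrI) auto
  moreover have "\<forall>\<^sub>F y in at x within S. norm (f y - f x) \<le> H * dist y x powr \<alpha>"
    using H \<open>x \<in> S\<close> by (auto simp: eventually_at_filter)
  ultimately have "((\<lambda>y. f y - f x) \<longlongrightarrow> 0) (at x within S)"
    by (rule Lim_null_comparison[rotated])
  then show "(f \<longlongrightarrow> f x) (at x within S)"
    by (rule LIM_zero_cancel)
qed

lemma compact_continuous_pos_bounded_below:
  fixes g :: "'a::metric_space \<Rightarrow> real"
  assumes "compact S" "continuous_on S g" "\<forall>x\<in>S. 0 < g x"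
  shows "\<exists>m>0. \<forall>x\<in>S. m \<le> g x"
proof (cases "S = {}")
  case True
  then show ?thesis by (intro exI[of _ 1]) simp
next
  case False
  then obtain x0 where "x0 \<in> S" "\<forall>x\<in>S. g x0 \<le> g x"
    using continuous_attains_inf[OF assms(1) _ assms(2)] by blast
  then show ?thesis using assms(3) by blast
qed

lemma compact_continuous_abs_bounded:
  fixes g :: "'a::metric_space \<Rightarrow> real"
  assumes "compact S" "continuous_on S g"
  obtains B where "0 \<le> B" "\<forall>x\<in>S. \<bar>g x\<bar> \<le> B"
proof -
  obtain B where "\<forall>x\<in>S. \<bar>g x\<bar> \<le> B"
    using compact_imp_bounded[OF compact_continuous_image[OF assms(2,1)]] by (auto simp: bounded_real)
  then show thesis
    by (intro that[of "max 0 B"]) (auto intro: max.coboundedI2)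
qed

lemma continuous_ratio_attains_max:
  fixes u w :: "'a::topological_space \<Rightarrow> real"
  assumes "compact K" "K \<noteq> {}" "continuous_on K u" "continuous_on K w" "\<forall>x\<in>K. 0 < w x"
  obtains x0 t where "x0 \<in> K" "\<forall>x\<in>K. u x \<le> t * w x" "u x0 = t * w x0"
proof -
  have "continuous_on K (\<lambda>x. u x / w x)"
    using assms(3-5) by (intro continuous_on_divide) auto
  then obtain x0 where x0: "x0 \<in> K" "\<forall>x\<in>K. u x / w x \<le> u x0 / w x0"
    using continuous_attains_sup[OF assms(1,2)] by blast
  show thesis
  proof
    show "\<forall>x\<in>K. u x \<le> u x0 / w x0 * w x"
      using x0(2) assms(5) by (simp add: divide_le_eq)
    have "w x0 \<noteq> 0" using x0(1) assms(5) by fastforce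
    then show "u x0 = u x0 / w x0 * w x0" by simp
  qed (fact x0(1))
qed

lemma frontier_subset_frontier_of_cover:
  assumes "open \<Omega>" "closure P \<subseteq> \<Omega>" "closure P \<union> N = \<Omega>"
  shows "frontier \<Omega> \<subseteq> frontier N"
proof
  fix x assume "x \<in> frontier \<Omega>"
  then have x: "x \<in> closure \<Omega>" "x \<notin> \<Omega>" using assms(1) by (auto simp: frontier_def interior_open)
  have "closure \<Omega> = closure P \<union> closure N" unfolding assms(3)[symmetric] by simp
  then have "x \<in> closure N" using x assms(2) by blast
  moreover have "x \<notin> interior N" using x(2) assms(3) interior_subset by blast
  ultimately show "x \<in> frontier N" by (simp add: frontier_def)
qed

section \<open>Partial and directional derivatives\<close>

lemma Ck_on_subset: "Ck_on k U f \<Longrightarrow> V \<subseteq> U \<Longrightarrow> Ck_on k V f"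
  by (induction k arbitrary: f) (auto intro: continuous_on_subset)

lemma Ck_on_1_D:
  assumes "Ck_on 1 U f"
  shows "continuous_on U f" "y \<in> U \<Longrightarrow> (\<lambda>t. f (y + t *\<^sub>R axis i 1)) differentiable (at 0)"
    "continuous_on U (pd i f)"
  using assms by auto

lemma Ck_on_2_D:
  assumes "Ck_on 2 U f"
  shows "Ck_on 1 U f" "Ck_on 1 U (pd i f)"
  using assms by (auto simp: numeral_2_eq_2)

lemma defining_functionD:
  assumes "defining_function \<Omega> \<rho>"
  shows "Ck_on k UNIV \<rho>" "\<Omega> = {x. \<rho> x < 0}" "frontier \<Omega> = {x. \<rho> x = 0}"
    "x \<in> frontier \<Omega> \<Longrightarrow> grad \<rho> x \<noteq> 0" "open \<Omega>"
proof -
  show \<rho>: "Ck_on k UNIV \<rho>" for k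
    using assms unfolding defining_function_def smooth_on_def by blast
  show \<Omega>: "\<Omega> = {x. \<rho> x < 0}" and "frontier \<Omega> = {x. \<rho> x = 0}" "x \<in> frontier \<Omega> \<Longrightarrow> grad \<rho> x \<noteq> 0"
    using assms unfolding defining_function_def by auto
  have "continuous_on UNIV \<rho>" using \<rho>[of 0] by simp
  then show "open \<Omega>"
    unfolding \<Omega> by (rule open_Collect_less[OF _ continuous_on_const])
qed

lemma normal_derivative_eq_0_iff:
  "normal_derivative \<Omega> u x = 0 \<longleftrightarrow> grad u x \<bullet> grad (SOME \<rho>. defining_function \<Omega> \<rho>) x = 0"
  by (auto simp: normal_derivative_def outward_normal_def Let_def)

lemma pd_has_real_derivative:
  assumes "(\<lambda>t. f (x + t *\<^sub>R axis i 1)) differentiable (at 0)"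
  shows "((\<lambda>t. f (x + t *\<^sub>R axis i 1)) has_real_derivative pd i f x) (at 0)"
  using assms DERIV_deriv_iff_real_differentiable unfolding pd_def by blast

lemma pd_has_real_derivative_along_axis:
  assumes "(\<lambda>t. f (x + s *\<^sub>R axis i 1 + t *\<^sub>R axis i 1)) differentiable (at 0)"
  shows "((\<lambda>s. f (x + s *\<^sub>R axis i 1)) has_real_derivative pd i f (x + s *\<^sub>R axis i 1)) (at s)"
proof -
  have "(\<lambda>t. f (x + s *\<^sub>R axis i 1 + t *\<^sub>R axis i 1)) = (\<lambda>t. f (x + (t + s) *\<^sub>R axis i 1))"
    by (simp add: algebra_simps scaleR_add_left)
  then show ?thesis
    using DERIV_shift[of "\<lambda>s. f (x + s *\<^sub>R axis i 1)" _ 0 s] pd_has_real_derivative[OF assms]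
    by simp
qed

lemma MVT_from_0:
  fixes \<phi> :: "real \<Rightarrow> real"
  assumes "\<And>z. \<bar>z\<bar> \<le> \<bar>c\<bar> \<Longrightarrow> (\<phi> has_real_derivative \<phi>' z) (at z)"
  shows "\<exists>\<zeta>. \<bar>\<zeta>\<bar> \<le> \<bar>c\<bar> \<and> \<phi> c - \<phi> 0 = c * \<phi>' \<zeta>"
proof (cases c "0::real" rule: linorder_cases)
  case less
  then obtain z where "c < z" "z < 0" "\<phi> 0 - \<phi> c = (0 - c) * \<phi>' z"
    using MVT2[of c 0 \<phi> \<phi>'] assms by fastforce
  then show ?thesis by (intro exI[of _ z]) (auto simp: algebra_simps)
next
  case greater
  then obtain z where "0 < z" "z < c" "\<phi> c - \<phi> 0 = (c - 0) * \<phi>' z"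
    using MVT2[of 0 c \<phi> \<phi>'] assms by fastforce
  then show ?thesis by (intro exI[of _ z]) auto
qed auto

lemma dist_axis_shift_le:
  fixes x P :: "real^'n"
  assumes "\<bar>z\<bar> \<le> \<bar>s * c\<bar>"
  shows "dist (x + s *\<^sub>R P + z *\<^sub>R axis k 1) x \<le> \<bar>s\<bar> * (norm P + \<bar>c\<bar>)"
proof -
  have "dist (x + s *\<^sub>R P + z *\<^sub>R axis k 1) x = norm (s *\<^sub>R P + z *\<^sub>R axis k (1::real))"
    by (simp add: dist_norm)
  also have "\<dots> \<le> \<bar>s\<bar> * norm P + \<bar>z\<bar>"
    using norm_triangle_ineq[of "s *\<^sub>R P" "z *\<^sub>R axis k (1::real)"] by simp
  also have "\<dots> \<le> \<bar>s\<bar> * (norm P + \<bar>c\<bar>)"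
    using assms by (simp add: abs_mult distrib_left)
  finally show ?thesis .
qed

lemma eventually_mean_value_along_axis:
  fixes f :: "real^'n \<Rightarrow> real"
  assumes "open U" "x \<in> U" "Ck_on 1 U f"
  shows "\<forall>\<^sub>F s in at 0. \<exists>z. \<bar>z\<bar> \<le> \<bar>s * c\<bar> \<and> c * pd k f (x + s *\<^sub>R P + z *\<^sub>R axis k 1) =
           (f (x + s *\<^sub>R P + (s * c) *\<^sub>R axis k 1) - f (x + s *\<^sub>R P)) / s"
proof -
  obtain e where e: "e > 0" "ball x e \<subseteq> U" using assms(1,2) open_contains_ball by blast
  have "((\<lambda>s. \<bar>s\<bar> * (norm P + \<bar>c\<bar>)) \<longlongrightarrow> 0) (at 0)"
    by (intro tendsto_mult_left_zero tendsto_rabs_zero tendsto_ident_at)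
  then have "\<forall>\<^sub>F s in at 0. \<bar>s\<bar> * (norm P + \<bar>c\<bar>) < e"
    using e(1) by (rule order_tendstoD(2))
  moreover have "\<forall>\<^sub>F s in at 0. s \<noteq> 0" by (simp add: eventually_at_filter)
  ultimately show ?thesis
  proof eventually_elim
    case (elim s)
    let ?\<phi> = "\<lambda>z. f (x + s *\<^sub>R P + z *\<^sub>R axis k 1)"
    have "(?\<phi> has_real_derivative pd k f (x + s *\<^sub>R P + z *\<^sub>R axis k 1)) (at z)"
      if "\<bar>z\<bar> \<le> \<bar>s * c\<bar>" for z
    proof -
      have "x + s *\<^sub>R P + z *\<^sub>R axis k 1 \<in> U"
        using dist_axis_shift_le[OF that, of x P k] elim(1) e(2) by (auto simp: dist_commute)
      then show ?thesis
        by (intro pd_has_real_derivative_along_axis Ck_on_1_D(2)[OF assms(3)])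
    qed
    then obtain z where "\<bar>z\<bar> \<le> \<bar>s * c\<bar>"
        "?\<phi> (s * c) - ?\<phi> 0 = s * c * pd k f (x + s *\<^sub>R P + z *\<^sub>R axis k 1)"
      using MVT_from_0[of "s * c" ?\<phi> "\<lambda>z. pd k f (x + s *\<^sub>R P + z *\<^sub>R axis k 1)"] by blast
    then show ?case using elim(2) by auto
  qed
qed

text \<open>The base point x + s P moves with s; continuity of pd k f at x makes the mean value
  points converge, which is all that is needed in place of differentiability of f.\<close>

lemma difference_quotient_along_axis_tendsto:
  fixes f :: "real^'n \<Rightarrow> real"
  assumes "open U" "x \<in> U" "Ck_on 1 U f"
  shows "((\<lambda>s. (f (x + s *\<^sub>R P + (s * c) *\<^sub>R axis k 1) - f (x + s *\<^sub>R P)) / s)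
           \<longlongrightarrow> c * pd k f x) (at 0)"
proof -
  obtain \<zeta> where \<zeta>: "\<forall>\<^sub>F s in at 0. \<bar>\<zeta> s\<bar> \<le> \<bar>s * c\<bar> \<and>
      c * pd k f (x + s *\<^sub>R P + \<zeta> s *\<^sub>R axis k 1) =
        (f (x + s *\<^sub>R P + (s * c) *\<^sub>R axis k 1) - f (x + s *\<^sub>R P)) / s"
    using eventually_mean_value_along_axis[OF assms, where c = c and k = k and P = P]
    unfolding eventually_ex by (elim exE)
  have "\<forall>\<^sub>F s in at 0. norm (dist (x + s *\<^sub>R P + \<zeta> s *\<^sub>R axis k 1) x) \<le> \<bar>s\<bar> * (norm P + \<bar>c\<bar>)"
    using \<zeta> by eventually_elim (simp add: dist_axis_shift_le)
  moreover have "((\<lambda>s. \<bar>s\<bar> * (norm P + \<bar>c\<bar>)) \<longlongrightarrow> 0) (at 0)"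
    by (intro tendsto_mult_left_zero tendsto_rabs_zero tendsto_ident_at)
  ultimately have "((\<lambda>s. dist (x + s *\<^sub>R P + \<zeta> s *\<^sub>R axis k 1) x) \<longlongrightarrow> 0) (at 0)"
    by (rule Lim_null_comparison)
  then have "((\<lambda>s. x + s *\<^sub>R P + \<zeta> s *\<^sub>R axis k 1) \<longlongrightarrow> x) (at 0)"
    by (rule tendsto_dist_iff[THEN iffD2])
  moreover have "isCont (pd k f) x"
    using Ck_on_1_D(3)[OF assms(3)] continuous_on_eq_continuous_at[OF assms(1)] assms(2) by blast
  ultimately have "((\<lambda>s. pd k f (x + s *\<^sub>R P + \<zeta> s *\<^sub>R axis k 1)) \<longlongrightarrow> pd k f x) (at 0)"
    by (rule isCont_tendsto_compose[rotated])
  then have "((\<lambda>s. c * pd k f (x + s *\<^sub>R P + \<zeta> s *\<^sub>R axis k 1)) \<longlongrightarrow> c * pd k f x) (at 0)"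
    by (rule tendsto_mult_left)
  moreover have "\<forall>\<^sub>F s in at 0. c * pd k f (x + s *\<^sub>R P + \<zeta> s *\<^sub>R axis k 1) =
      (f (x + s *\<^sub>R P + (s * c) *\<^sub>R axis k 1) - f (x + s *\<^sub>R P)) / s"
    using \<zeta> by (rule eventually_mono) blast
  ultimately show ?thesis
    by (rule Lim_transform_eventually)
qed

lemma directional_derivative_grad:
  fixes f :: "real^'n \<Rightarrow> real"
  assumes "open U" "x \<in> U" "Ck_on 1 U f"
  shows "((\<lambda>s. f (x + s *\<^sub>R d)) has_real_derivative grad f x \<bullet> d) (at 0)"
proof -
  have partial_sums: "((\<lambda>s. (f (x + s *\<^sub>R (\<Sum>i\<in>S. d$i *\<^sub>R axis i 1)) - f x) / s)
          \<longlongrightarrow> (\<Sum>i\<in>S. d$i * pd i f x)) (at 0)" if "finite S" for S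
    using that
  proof (induction S rule: finite_induct)
    case (insert k S)
    let ?P = "\<Sum>i\<in>S. d$i *\<^sub>R axis i (1::real)"
    have split: "(f (x + s *\<^sub>R (\<Sum>i\<in>insert k S. d$i *\<^sub>R axis i 1)) - f x) / s =
        (f (x + s *\<^sub>R ?P + (s * d$k) *\<^sub>R axis k 1) - f (x + s *\<^sub>R ?P)) / s
        + (f (x + s *\<^sub>R ?P) - f x) / s" for s
    proof -
      have "x + s *\<^sub>R (\<Sum>i\<in>insert k S. d$i *\<^sub>R axis i 1) = x + s *\<^sub>R ?P + (s * d$k) *\<^sub>R axis k 1"
        using insert(1,2) by (simp add: scaleR_add_right add_ac)
      moreover have "(a - c) / s = (a - b) / s + (b - c) / s" for a b c :: real
        by (simp add: diff_divide_distrib)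
      ultimately show ?thesis by metis
    qed
    have "((\<lambda>s. (f (x + s *\<^sub>R ?P + (s * d$k) *\<^sub>R axis k 1) - f (x + s *\<^sub>R ?P)) / s
              + (f (x + s *\<^sub>R ?P) - f x) / s)
          \<longlongrightarrow> d$k * pd k f x + (\<Sum>i\<in>S. d$i * pd i f x)) (at 0)"
      using tendsto_add[OF difference_quotient_along_axis_tendsto[OF assms] insert.IH] .
    then show ?case
      unfolding split by (simp only: sum.insert[OF insert(1,2)])
  next
    case empty
    show ?case by simp
  qed
  have "(\<Sum>i\<in>UNIV. d$i *\<^sub>R axis i 1) = d"
    using basis_expansion[of d] by (simp add: scalar_mult_eq_scaleR)
  moreover have "grad f x \<bullet> d = (\<Sum>i\<in>UNIV. d$i * pd i f x)"
    by (simp add: grad_def inner_vec_def mult.commute)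
  ultimately show ?thesis
    using partial_sums[of UNIV] unfolding DERIV_def by simp
qed

section \<open>Maximum principles at a contact point\<close>

lemma DERIV_local_max_second_deriv_nonpos:
  fixes G G' :: "real \<Rightarrow> real"
  assumes r: "0 < r"
    and G: "\<And>s. \<bar>s\<bar> < r \<Longrightarrow> (G has_real_derivative G' s) (at s)"
    and G': "(G' has_real_derivative G'') (at 0)"
    and max: "\<And>s. \<bar>s\<bar> < r \<Longrightarrow> G s \<le> G 0"
  shows "G'' \<le> 0"
proof (rule ccontr)
  assume "\<not> G'' \<le> 0"
  have "G' 0 = 0"
    using DERIV_local_max[OF G[of 0] r] max r by auto
  obtain d where d: "0 < d" "\<And>h. 0 < h \<Longrightarrow> h < d \<Longrightarrow> G' 0 < G' (0 + h)"
    using DERIV_pos_inc_right[OF G'] \<open>\<not> G'' \<le> 0\<close> by force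
  define s where "s = min d r / 2"
  have s: "0 < s" "s < d" "s < r" using d(1) r by (auto simp: s_def)
  obtain z where z: "0 < z" "z < s" "G s - G 0 = (s - 0) * G' z"
    using MVT2[of 0 s G G'] s G by fastforce
  have "0 < G' z" using d(2)[of z] z s \<open>G' 0 = 0\<close> by auto
  then have "G 0 < G s" using z s by (simp add: algebra_simps)
  then show False using max[of s] s by auto
qed

lemma laplacian_le_at_contact_point:
  fixes u w :: "real^'n \<Rightarrow> real"
  assumes "open V" "x0 \<in> V" "Ck_on 2 V u" "Ck_on 2 V w"
    and le: "\<forall>y\<in>V. u y \<le> t * w y" and eq: "u x0 = t * w x0"
  shows "laplacian u x0 \<le> t * laplacian w x0"
proof -
  obtain r where r: "0 < r" "ball x0 r \<subseteq> V" using assms(1,2) open_contains_ball by blast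
  have "pd i (pd i u) x0 - t * pd i (pd i w) x0 \<le> 0" for i
  proof (rule DERIV_local_max_second_deriv_nonpos[OF r(1)])
    let ?x = "\<lambda>s. x0 + s *\<^sub>R axis i (1::real)"
    have on_line: "?x s \<in> V" if "\<bar>s\<bar> < r" for s
      using r(2) that by (auto simp: dist_norm)
    have first: "((\<lambda>s. g (?x s)) has_real_derivative pd i g (?x s)) (at s)"
      if "Ck_on 2 V g" "\<bar>s\<bar> < r" for g s
      by (rule pd_has_real_derivative_along_axis[OF Ck_on_1_D(2)[OF Ck_on_2_D(1)[OF that(1)] on_line[OF that(2)]]])
    have second: "((\<lambda>s. pd i g (?x s)) has_real_derivative pd i (pd i g) x0) (at 0)"
      if "Ck_on 2 V g" for g
      by (rule pd_has_real_derivative[OF Ck_on_1_D(2)[OF Ck_on_2_D(2)[OF that] assms(2)]])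
    show "((\<lambda>s. u (?x s) - t * w (?x s)) has_real_derivative pd i u (?x s) - t * pd i w (?x s)) (at s)"
      if "\<bar>s\<bar> < r" for s
      by (rule DERIV_diff[OF first[OF assms(3) that] DERIV_cmult[OF first[OF assms(4) that]]])
    show "((\<lambda>s. pd i u (?x s) - t * pd i w (?x s)) has_real_derivative
        pd i (pd i u) x0 - t * pd i (pd i w) x0) (at 0)"
      by (rule DERIV_diff[OF second[OF assms(3)] DERIV_cmult[OF second[OF assms(4)]]])
    show "u (?x s) - t * w (?x s) \<le> u (?x 0) - t * w (?x 0)" if "\<bar>s\<bar> < r" for s
      using le on_line[OF that] eq by simp
  qed
  then show ?thesis
    unfolding laplacian_def by (simp add: sum_distrib_left sum_mono)
qed

lemma inward_derivative_nonpos_at_max: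
  fixes f \<rho> :: "real^'n \<Rightarrow> real"
  assumes \<rho>: "Ck_on 1 UNIV \<rho>" "\<rho> x0 \<le> 0" "{y. \<rho> y < 0} \<subseteq> S" "grad \<rho> x0 \<bullet> d < 0"
    and f: "((\<lambda>s. f (x0 + s *\<^sub>R d)) has_real_derivative D) (at 0)" "\<forall>y\<in>S. f y \<le> f x0"
  shows "D \<le> 0"
proof (rule ccontr)
  assume "\<not> D \<le> 0"
  then obtain h1 where h1: "0 < h1" "\<And>h. 0 < h \<Longrightarrow> h < h1 \<Longrightarrow> f x0 < f (x0 + h *\<^sub>R d)"
    using DERIV_pos_inc_right[OF f(1)] by force
  obtain h2 where h2: "0 < h2" "\<And>h. 0 < h \<Longrightarrow> h < h2 \<Longrightarrow> \<rho> (x0 + h *\<^sub>R d) < \<rho> x0"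
    using DERIV_neg_dec_right[OF directional_derivative_grad[OF open_UNIV UNIV_I \<rho>(1)] \<rho>(4)]
    by force
  define h where "h = min h1 h2 / 2"
  have h: "0 < h" "h < h1" "h < h2" using h1(1) h2(1) by (auto simp: h_def)
  have "x0 + h *\<^sub>R d \<in> S" using h2(2)[OF h(1,3)] \<rho>(2,3) by force
  then show False using h1(2)[OF h(1,2)] f(2) by force
qed

text \<open>Two outward normals at a common boundary point of nested domains cannot form an obtuse angle:
  otherwise e = \<nabla>\<rho> - \<nabla>\<tau> would point into {\<tau> < 0} while increasing \<rho>.\<close>

lemma inner_grad_defining_functions_pos:
  fixes \<rho> \<tau> :: "real^'n \<Rightarrow> real"
  assumes "Ck_on 1 UNIV \<rho>" "Ck_on 1 UNIV \<tau>" "\<rho> x0 = 0" "\<tau> x0 \<le> 0"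
    and "grad \<rho> x0 \<noteq> 0" "grad \<tau> x0 \<noteq> 0"
    and "{y. \<tau> y < 0} \<subseteq> S" "\<forall>y\<in>S. \<rho> y \<le> 0"
  shows "0 < grad \<tau> x0 \<bullet> grad \<rho> x0"
proof (rule ccontr)
  assume "\<not> 0 < grad \<tau> x0 \<bullet> grad \<rho> x0"
  define e where "e = grad \<rho> x0 - grad \<tau> x0"
  have "0 < grad \<tau> x0 \<bullet> grad \<tau> x0" "0 < grad \<rho> x0 \<bullet> grad \<rho> x0"
    using assms(5,6) by auto
  moreover have "grad \<tau> x0 \<bullet> e = grad \<tau> x0 \<bullet> grad \<rho> x0 - grad \<tau> x0 \<bullet> grad \<tau> x0"
    "grad \<rho> x0 \<bullet> e = grad \<rho> x0 \<bullet> grad \<rho> x0 - grad \<tau> x0 \<bullet> grad \<rho> x0"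
    by (simp_all add: e_def inner_diff_right inner_commute)
  ultimately have e: "grad \<tau> x0 \<bullet> e < 0" "0 < grad \<rho> x0 \<bullet> e"
    using \<open>\<not> 0 < grad \<tau> x0 \<bullet> grad \<rho> x0\<close> by linarith+
  have "grad \<rho> x0 \<bullet> e \<le> 0"
    by (rule inward_derivative_nonpos_at_max[OF assms(2,4,7) e(1)
          directional_derivative_grad[OF open_UNIV UNIV_I assms(1)]])
      (use assms(3,8) in simp)
  with e(2) show False by simp
qed

section \<open>The exponential barrier\<close>

text \<open>By laplacian_exp_barrier, \<Delta>(A - exp (- j \<tau>)) = j exp (- j \<tau>) (\<Delta>\<tau> - j \<bar>\<nabla>\<tau>\<bar>^2): for large j the
  barrier is uniformly superharmonic wherever \<bar>\<nabla>\<tau>\<bar> is bounded below, and A keeps it \<ge> 1.\<close>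

definition exp_barrier :: "real \<Rightarrow> real \<Rightarrow> (real^'n::finite \<Rightarrow> real) \<Rightarrow> real^'n \<Rightarrow> real" where
  "exp_barrier A j \<tau> x = A - exp (- (j * \<tau> x))"

lemma exp_barrier_has_derivative_along:
  assumes "((\<lambda>t. \<tau> (x + t *\<^sub>R v)) has_real_derivative D) (at 0)"
  shows "((\<lambda>t. exp_barrier A j \<tau> (x + t *\<^sub>R v)) has_real_derivative j * exp (- (j * \<tau> x)) * D) (at 0)"
  unfolding exp_barrier_def by (rule derivative_eq_intros refl assms | simp)+

lemma pd_exp_barrier:
  assumes "Ck_on 1 UNIV \<tau>"
  shows "pd i (exp_barrier A j \<tau>) x = j * exp (- (j * \<tau> x)) * pd i \<tau> x"
  unfolding pd_def[of i "exp_barrier A j \<tau>"]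
  by (rule DERIV_imp_deriv[OF exp_barrier_has_derivative_along[OF
        pd_has_real_derivative[OF Ck_on_1_D(2)[OF assms UNIV_I]]]])

lemma pd_pd_exp_barrier_has_derivative:
  assumes "Ck_on 2 UNIV \<tau>"
  shows "((\<lambda>t. pd i (exp_barrier A j \<tau>) (x + t *\<^sub>R axis k 1)) has_real_derivative
      j * exp (- (j * \<tau> x)) * (pd k (pd i \<tau>) x - j * pd k \<tau> x * pd i \<tau> x)) (at 0)"
proof -
  have \<tau>: "((\<lambda>t. \<tau> (x + t *\<^sub>R axis k 1)) has_real_derivative pd k \<tau> x) (at 0)"
    by (rule pd_has_real_derivative[OF Ck_on_1_D(2)[OF Ck_on_2_D(1)[OF assms] UNIV_I]])
  have pd\<tau>: "((\<lambda>t. pd i \<tau> (x + t *\<^sub>R axis k 1)) has_real_derivative pd k (pd i \<tau>) x) (at 0)"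
    by (rule pd_has_real_derivative[OF Ck_on_1_D(2)[OF Ck_on_2_D(2)[OF assms] UNIV_I]])
  have "((\<lambda>t. j * exp (- (j * \<tau> (x + t *\<^sub>R axis k 1))) * pd i \<tau> (x + t *\<^sub>R axis k 1))
      has_real_derivative j * exp (- (j * \<tau> x)) * (pd k (pd i \<tau>) x - j * pd k \<tau> x * pd i \<tau> x)) (at 0)"
    by (rule derivative_eq_intros refl \<tau> pd\<tau> | simp add: algebra_simps)+
  then show ?thesis
    by (simp add: pd_exp_barrier[OF Ck_on_2_D(1)[OF assms]])
qed

lemma pd_pd_exp_barrier:
  assumes "Ck_on 2 UNIV \<tau>"
  shows "pd k (pd i (exp_barrier A j \<tau>)) x =
      j * exp (- (j * \<tau> x)) * (pd k (pd i \<tau>) x - j * pd k \<tau> x * pd i \<tau> x)"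
  unfolding pd_def[of k "pd i (exp_barrier A j \<tau>)"]
  by (rule DERIV_imp_deriv[OF pd_pd_exp_barrier_has_derivative[OF assms]])

lemma Ck_on_2_exp_barrier:
  assumes "Ck_on 2 UNIV \<tau>"
  shows "Ck_on 2 UNIV (exp_barrier A j \<tau>)"
proof -
  have \<tau>: "Ck_on 1 UNIV \<tau>" "\<And>i. Ck_on 1 UNIV (pd i \<tau>)"
    using Ck_on_2_D[OF assms] by blast+
  have pd1: "pd i (exp_barrier A j \<tau>) = (\<lambda>x. j * exp (- (j * \<tau> x)) * pd i \<tau> x)" for i
    using pd_exp_barrier[OF \<tau>(1)] by (intro ext)
  have pd2: "pd k (pd i (exp_barrier A j \<tau>)) =
      (\<lambda>x. j * exp (- (j * \<tau> x)) * (pd k (pd i \<tau>) x - j * pd k \<tau> x * pd i \<tau> x))" for i k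
    using pd_pd_exp_barrier[OF assms] by (intro ext)
  have "continuous_on UNIV (exp_barrier A j \<tau>)"
    unfolding exp_barrier_def[abs_def] by (intro continuous_intros Ck_on_1_D(1)[OF \<tau>(1)])
  moreover have "(\<lambda>t. exp_barrier A j \<tau> (x + t *\<^sub>R axis i 1)) differentiable (at 0)" for x i
    using exp_barrier_has_derivative_along[OF pd_has_real_derivative[OF Ck_on_1_D(2)[OF \<tau>(1) UNIV_I]]]
    unfolding real_differentiable_def by blast
  moreover have "continuous_on UNIV (pd i (exp_barrier A j \<tau>))" for i
    unfolding pd1 by (intro continuous_intros Ck_on_1_D(1,3)[OF \<tau>(1)])
  moreover have "(\<lambda>t. pd i (exp_barrier A j \<tau>) (x + t *\<^sub>R axis k 1)) differentiable (at 0)" for x i k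
    using pd_pd_exp_barrier_has_derivative[OF assms] unfolding real_differentiable_def by blast
  moreover have "continuous_on UNIV (pd k (pd i (exp_barrier A j \<tau>)))" for i k
    unfolding pd2 by (intro continuous_intros Ck_on_1_D(1,3)[OF \<tau>(1)] Ck_on_1_D(3)[OF \<tau>(2)])
  ultimately show ?thesis
    by (simp add: numeral_2_eq_2)
qed

lemma laplacian_exp_barrier:
  assumes "Ck_on 2 UNIV \<tau>"
  shows "laplacian (exp_barrier A j \<tau>) x =
      j * exp (- (j * \<tau> x)) * (laplacian \<tau> x - j * (norm (grad \<tau> x))\<^sup>2)"
proof -
  have "(norm (grad \<tau> x))\<^sup>2 = (\<Sum>i\<in>UNIV. pd i \<tau> x * pd i \<tau> x)"
    by (simp add: power2_norm_eq_inner grad_def inner_vec_def)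
  then show ?thesis
    by (simp add: laplacian_def pd_pd_exp_barrier[OF assms] sum_distrib_left sum_subtractf
        algebra_simps)
qed

lemma exp_barrier_bounds:
  assumes "\<bar>\<tau> x\<bar> \<le> R" "0 \<le> j"
  shows "1 \<le> exp_barrier (1 + exp (j * R)) j \<tau> x" "exp_barrier (1 + exp (j * R)) j \<tau> x \<le> 1 + exp (j * R)"
    and "exp (- (j * R)) \<le> exp (- (j * \<tau> x))" "exp (- (j * \<tau> x)) \<le> exp (j * R)"
proof -
  have "- (j * R) \<le> - (j * \<tau> x)" "- (j * \<tau> x) \<le> j * R"
    using mult_left_mono[OF abs_le_D1[OF assms(1)] assms(2)]
      mult_left_mono[OF abs_le_D2[OF assms(1)] assms(2)] by auto
  then show "exp (- (j * R)) \<le> exp (- (j * \<tau> x))" "exp (- (j * \<tau> x)) \<le> exp (j * R)"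
    by auto
  then show "1 \<le> exp_barrier (1 + exp (j * R)) j \<tau> x" "exp_barrier (1 + exp (j * R)) j \<tau> x \<le> 1 + exp (j * R)"
    by (auto simp: exp_barrier_def)
qed

lemma exp_barrier_laplacian_bounds:
  assumes "Ck_on 2 UNIV \<tau>" "\<bar>\<tau> x\<bar> \<le> R" "\<bar>laplacian \<tau> x\<bar> \<le> L" "1 \<le> j"
  shows "laplacian (exp_barrier A j \<tau>) x \<le> j * exp (j * R) * L"
    and "L + 1 \<le> j * (norm (grad \<tau> x))\<^sup>2 \<Longrightarrow> exp (- (j * R)) \<le> - laplacian (exp_barrier A j \<tau>) x"
proof -
  let ?e = "exp (- (j * \<tau> x))"
  have e: "exp (- (j * R)) \<le> ?e" "?e \<le> exp (j * R)"
    using exp_barrier_bounds(3,4)[of \<tau> x R j] assms(2,4) by auto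
  have lap: "laplacian (exp_barrier A j \<tau>) x = j * ?e * (laplacian \<tau> x - j * (norm (grad \<tau> x))\<^sup>2)"
    by (rule laplacian_exp_barrier[OF assms(1)])
  have "0 \<le> j * (norm (grad \<tau> x))\<^sup>2" using assms(4) by simp
  then have "laplacian \<tau> x - j * (norm (grad \<tau> x))\<^sup>2 \<le> L"
    using abs_le_D1[OF assms(3)] by linarith
  then have "j * ?e * (laplacian \<tau> x - j * (norm (grad \<tau> x))\<^sup>2) \<le> j * ?e * L"
    using assms(4) by (intro mult_left_mono) auto
  also have "\<dots> \<le> j * exp (j * R) * L"
    using e(2) assms(3,4) by (intro mult_right_mono mult_left_mono) auto
  finally show "laplacian (exp_barrier A j \<tau>) x \<le> j * exp (j * R) * L"
    unfolding lap .
  assume "L + 1 \<le> j * (norm (grad \<tau> x))\<^sup>2"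
  then have "1 \<le> j * (norm (grad \<tau> x))\<^sup>2 - laplacian \<tau> x"
    using assms(3) by linarith
  then have "j * ?e * 1 \<le> j * ?e * (j * (norm (grad \<tau> x))\<^sup>2 - laplacian \<tau> x)"
    using assms(4) by (intro mult_left_mono) auto
  moreover have "exp (- (j * R)) \<le> j * ?e * 1"
    using e(1) assms(4) by (simp add: order_trans[OF _ mult_right_mono[of 1 j]])
  ultimately show "exp (- (j * R)) \<le> - laplacian (exp_barrier A j \<tau>) x"
    unfolding lap by (simp add: algebra_simps)
qed

lemma pos_near_frontier_or_neg_bounded_away:
  fixes g a :: "'a::heine_borel \<Rightarrow> real"
  assumes "bounded Om" "open Om"
    and "continuous_on (closure Om) g" "continuous_on (closure Om) a"
    and "\<forall>x\<in>frontier Om. 0 < g x" "\<forall>x\<in>Om. a x < 0"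
  obtains m \<delta> where "0 < m" "0 < \<delta>" "\<forall>x\<in>Om. m \<le> g x \<or> a x \<le> - \<delta>"
proof -
  have "frontier Om \<subseteq> closure Om" by (auto simp: frontier_def)
  then obtain m where m: "0 < m" "\<forall>x\<in>frontier Om. m \<le> g x"
    using compact_continuous_pos_bounded_below[OF compact_frontier_bounded[OF assms(1)]
        continuous_on_subset[OF assms(3)] assms(5)] by blast
  define E where "E = closure Om \<inter> g -` {..m / 2}"
  have "closed E"
    unfolding E_def by (rule continuous_closed_preimage[OF assms(3) closed_closure closed_atMost])
  then have "compact E"
    using compact_Int_closed[of "closure Om" E] assms(1) by (simp add: E_def)
  moreover have "continuous_on E (\<lambda>x. - a x)"
    unfolding E_def by (intro continuous_intros continuous_on_subset[OF assms(4)]) auto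
  moreover have "\<forall>x\<in>E. 0 < - a x"
  proof
    fix x assume x: "x \<in> E"
    then have "x \<notin> frontier Om" using m unfolding E_def by fastforce
    then have "x \<in> Om" using x assms(2) unfolding E_def by (auto simp: frontier_def interior_open)
    then show "0 < - a x" using assms(6) by simp
  qed
  ultimately obtain \<delta> where \<delta>: "0 < \<delta>" "\<forall>x\<in>E. \<delta> \<le> - a x"
    using compact_continuous_pos_bounded_below by blast
  show thesis
  proof (rule that[of "m / 2" \<delta>])
    show "\<forall>x\<in>Om. m / 2 \<le> g x \<or> a x \<le> - \<delta>"
    proof
      fix x assume "x \<in> Om"
      show "m / 2 \<le> g x \<or> a x \<le> - \<delta>"
      proof (cases "m / 2 \<le> g x")
        case False
        then have "x \<in> E" using \<open>x \<in> Om\<close> closure_subset unfolding E_def by auto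
        then show ?thesis using \<delta>(2) by force
      qed simp
    qed
  qed (use m(1) \<delta>(1) in auto)
qed

lemma defining_function_grad_or_neg_bounded_away:
  fixes \<tau> a :: "real^'n \<Rightarrow> real"
  assumes "defining_function Om \<tau>" "bounded Om"
    and "continuous_on (closure Om) a" "\<forall>x\<in>Om. a x < 0"
  obtains m \<delta> where "0 < m" "0 < \<delta>" "\<forall>x\<in>Om. m \<le> (norm (grad \<tau> x))\<^sup>2 \<or> a x \<le> - \<delta>"
proof (rule pos_near_frontier_or_neg_bounded_away[OF assms(2) defining_functionD(5)[OF assms(1)] _ assms(3)])
  have "continuous_on UNIV (pd i \<tau>)" for i
    using Ck_on_1_D(3)[OF Ck_on_2_D(1)[OF defining_functionD(1)[OF assms(1)]]] .
  then have "continuous_on UNIV (\<lambda>x. (norm (grad \<tau> x))\<^sup>2)"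
    unfolding grad_def by (intro continuous_intros)
  then show "continuous_on (closure Om) (\<lambda>x. (norm (grad \<tau> x))\<^sup>2)"
    by (rule continuous_on_subset) simp
  show "\<forall>x\<in>frontier Om. 0 < (norm (grad \<tau> x))\<^sup>2"
    using defining_functionD(4)[OF assms(1)] by simp
qed (use assms(4) in auto)

lemma exp_barrier_exists:
  fixes \<tau> a :: "real^'n \<Rightarrow> real"
  assumes K: "compact K" "closure Om \<subseteq> K"
    and Om: "defining_function Om \<tau>" "bounded Om"
    and a: "continuous_on K a" "\<forall>x\<in>Om. a x < 0"
  obtains j A \<kappa> D \<delta> where "0 < j" "0 < \<kappa>" "0 < \<delta>" "0 \<le> D"
    "\<forall>x\<in>K. 1 \<le> exp_barrier A j \<tau> x \<and> exp_barrier A j \<tau> x \<le> A \<and> laplacian (exp_barrier A j \<tau>) x \<le> D"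
    "\<forall>x\<in>Om. \<kappa> \<le> - laplacian (exp_barrier A j \<tau>) x \<or> a x \<le> - \<delta>"
proof -
  have \<tau>: "Ck_on 2 UNIV \<tau>" using defining_functionD(1)[OF Om(1)] .
  obtain m \<delta> where m: "0 < m" "0 < \<delta>" "\<forall>x\<in>Om. m \<le> (norm (grad \<tau> x))\<^sup>2 \<or> a x \<le> - \<delta>"
    using defining_function_grad_or_neg_bounded_away[OF Om continuous_on_subset[OF a(1) K(2)] a(2)] .
  have "continuous_on K \<tau>"
    using Ck_on_1_D(1)[OF Ck_on_2_D(1)[OF \<tau>]] by (rule continuous_on_subset) simp
  then obtain R where R: "\<forall>x\<in>K. \<bar>\<tau> x\<bar> \<le> R"
    using compact_continuous_abs_bounded[OF K(1)] by blast
  have "continuous_on K (laplacian \<tau>)"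
    unfolding laplacian_def[abs_def]
    by (intro continuous_intros continuous_on_subset[OF Ck_on_1_D(3)[OF Ck_on_2_D(2)[OF \<tau>]]]) simp
  then obtain L where L: "0 \<le> L" "\<forall>x\<in>K. \<bar>laplacian \<tau> x\<bar> \<le> L"
    using compact_continuous_abs_bounded[OF K(1)] by blast
  define j where "j = max 1 ((L + 1) / m)"
  have j: "1 \<le> j" "L + 1 \<le> j * m"
    using m(1) by (auto simp: j_def field_simps max_def)
  let ?A = "1 + exp (j * R)" and ?w = "exp_barrier (1 + exp (j * R)) j \<tau>"
  show thesis
  proof (rule that[of j "exp (- (j * R))" \<delta> "j * exp (j * R) * L" ?A])
    show "\<forall>x\<in>K. 1 \<le> ?w x \<and> ?w x \<le> ?A \<and> laplacian ?w x \<le> j * exp (j * R) * L"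
    proof
      fix x assume "x \<in> K"
      then have "\<bar>\<tau> x\<bar> \<le> R" "\<bar>laplacian \<tau> x\<bar> \<le> L" using R L(2) by auto
      then show "1 \<le> ?w x \<and> ?w x \<le> ?A \<and> laplacian ?w x \<le> j * exp (j * R) * L"
        using exp_barrier_bounds(1,2)[of \<tau> x R j] j(1)
          exp_barrier_laplacian_bounds(1)[OF \<tau> _ _ j(1), where A = ?A] by simp
    qed
    show "\<forall>x\<in>Om. exp (- (j * R)) \<le> - laplacian ?w x \<or> a x \<le> - \<delta>"
    proof
      fix x assume x: "x \<in> Om"
      then have "x \<in> K" using K(2) closure_subset by blast
      have "L + 1 \<le> j * (norm (grad \<tau> x))\<^sup>2" if "m \<le> (norm (grad \<tau> x))\<^sup>2"
        using j mult_left_mono[OF that, of j] by linarith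
      then show "exp (- (j * R)) \<le> - laplacian ?w x \<or> a x \<le> - \<delta>"
        using m(3) x exp_barrier_laplacian_bounds(2)[OF \<tau> _ _ j(1)] R L(2) \<open>x \<in> K\<close> by blast
    qed
  qed (use j m L(1) in auto)
qed

section \<open>The a priori estimate\<close>

lemma reaction_term_le:
  fixes lam \<Lambda> \<epsilon> bx B u q p ax :: real
  assumes "0 \<le> lam" "lam \<le> \<Lambda>" "0 < \<epsilon>" "\<epsilon> \<le> 1" "\<bar>bx\<bar> \<le> B" "\<Lambda> * (B + 1) \<le> L"
    and "1 \<le> u" "1 < q" "q < 2"
  shows "lam * (bx - \<epsilon>) * \<bar>u + \<epsilon>\<bar> powr (q - 2) * u + ax * \<bar>u\<bar> powr (p - 2) * u
      \<le> 2 * L * u powr (q - 1) + ax * u powr (p - 1)"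
proof -
  have "\<bar>u + \<epsilon>\<bar> powr (q - 2) * u \<le> (u + \<epsilon>) powr (q - 2) * (u + \<epsilon>)"
    using assms by simp
  also have "\<dots> = (u + \<epsilon>) powr (q - 1)"
    using assms powr_add[of "u + \<epsilon>" "q - 2" 1] by simp
  also have "\<dots> \<le> (2 * u) powr (q - 1)"
    using assms by (intro powr_mono2) auto
  also have "\<dots> = 2 powr (q - 1) * u powr (q - 1)"
    using assms by (simp add: powr_mult)
  also have "\<dots> \<le> 2 * u powr (q - 1)"
    using powr_mono[of "q - 1" 1 2] assms by (intro mult_right_mono) auto
  finally have sublinear: "\<bar>u + \<epsilon>\<bar> powr (q - 2) * u \<le> 2 * u powr (q - 1)" .
  have "lam * (bx - \<epsilon>) \<le> lam * \<bar>bx - \<epsilon>\<bar>"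
    using assms(1) by (intro mult_left_mono) auto
  also have "\<dots> \<le> \<Lambda> * (B + 1)"
    using assms by (intro mult_mono) auto
  also have "\<dots> \<le> L" by (fact assms(6))
  finally have coefficient: "lam * (bx - \<epsilon>) \<le> L" .
  have "0 \<le> \<Lambda> * (B + 1)" using assms(1,2,5) by simp
  then have "0 \<le> L" using assms(6) by linarith
  then have "lam * (bx - \<epsilon>) * (\<bar>u + \<epsilon>\<bar> powr (q - 2) * u) \<le> L * (2 * u powr (q - 1))"
    using assms by (intro mult_mono[OF coefficient sublinear]) auto
  moreover have "\<bar>u\<bar> powr (p - 2) * u = u powr (p - 1)"
    using assms powr_add[of u "p - 2" 1] by simp
  ultimately show ?thesis
    by (simp only: mult.assoc)
qed

lemma le_powr_inverse_if_powr_le: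
  fixes u s M :: real
  assumes "0 \<le> u" "0 < s" "u powr s \<le> M"
  shows "u \<le> M powr (1 / s)"
proof -
  have "u = (u powr s) powr (1 / s)"
    using assms by (simp add: powr_powr)
  also have "\<dots> \<le> M powr (1 / s)"
    using assms by (intro powr_mono2) auto
  finally show ?thesis .
qed

lemma linear_le_sublinear_power_bound:
  fixes u \<kappa> C r :: real
  assumes "1 \<le> u" "0 < \<kappa>" "r < 1" "\<kappa> * u \<le> C * u powr r"
  shows "u \<le> (C / \<kappa>) powr (1 / (1 - r))"
proof (rule le_powr_inverse_if_powr_le)
  have "0 < u powr r" using assms(1) by simp
  then have "u / u powr r \<le> C / \<kappa>"
    using assms(2,4) by (simp add: field_simps)
  then show "u powr (1 - r) \<le> C / \<kappa>"
    using assms(1) by (simp add: powr_diff)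
qed (use assms in auto)

lemma superlinear_power_le_linear_bound:
  fixes u \<delta> C r :: real
  assumes "1 \<le> u" "0 < \<delta>" "1 < r" "\<delta> * u powr r \<le> C * u"
  shows "u \<le> (C / \<delta>) powr (1 / (r - 1))"
proof (rule le_powr_inverse_if_powr_le)
  have "u powr r / u \<le> C / \<delta>"
    using assms(1,2,4) by (simp add: field_simps)
  then show "u powr (r - 1) \<le> C / \<delta>"
    using assms(1) by (simp add: powr_diff)
qed (use assms in auto)

lemma contact_value_bound:
  fixes u0 t Lu Lw ax L A \<kappa> \<delta> D p q :: real
  assumes pde: "- Lu \<le> 2 * L * u0 powr (q - 1) + ax * u0 powr (p - 1)"
    and contact: "Lu \<le> t * Lw" "0 < t" "t \<le> u0" "u0 \<le> t * A" "1 \<le> u0"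
    and barrier: "\<kappa> \<le> - Lw \<or> ax \<le> - \<delta>" "Lw \<le> D" "0 < \<kappa>" "0 < \<delta>" "0 \<le> D"
    and "ax < 0" "0 \<le> L" "q < 2" "2 < p"
  shows "u0 \<le> max ((2 * L * A / \<kappa>) powr (1 / (2 - q))) (((2 * L + D) / \<delta>) powr (1 / (p - 2)))"
  using barrier(1)
proof
  assume "\<kappa> \<le> - Lw"
  have "ax * u0 powr (p - 1) \<le> 0"
    using \<open>ax < 0\<close> by (simp add: mult_nonpos_nonneg)
  have "t * \<kappa> \<le> t * (- Lw)"
    using \<open>\<kappa> \<le> - Lw\<close> contact(2) by (intro mult_left_mono) auto
  also have "\<dots> \<le> 2 * L * u0 powr (q - 1)"
    using contact(1) pde \<open>ax * u0 powr (p - 1) \<le> 0\<close> by simp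
  finally have t\<kappa>: "t * \<kappa> \<le> 2 * L * u0 powr (q - 1)" .
  have "t \<le> t * A" using contact(3,4) by linarith
  then have "1 \<le> A" using contact(2) by (simp add: mult_le_cancel_left1)
  have "\<kappa> * u0 \<le> \<kappa> * (t * A)"
    using contact(4) barrier(3) by (intro mult_left_mono) auto
  also have "\<dots> = A * (t * \<kappa>)" by simp
  also have "\<dots> \<le> A * (2 * L * u0 powr (q - 1))"
    using t\<kappa> \<open>1 \<le> A\<close> by (intro mult_left_mono) auto
  finally have "\<kappa> * u0 \<le> 2 * L * A * u0 powr (q - 1)" by (simp add: mult_ac)
  moreover have "q - 1 < 1" using \<open>q < 2\<close> by simp
  ultimately have "u0 \<le> (2 * L * A / \<kappa>) powr (1 / (1 - (q - 1)))"
    using linear_le_sublinear_power_bound[OF contact(5) barrier(3)] by blast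
  then show ?thesis by simp
next
  assume "ax \<le> - \<delta>"
  have "u0 powr (q - 1) \<le> u0"
    using powr_mono[of "q - 1" 1 u0] contact(5) \<open>q < 2\<close> by simp
  then have "2 * L * u0 powr (q - 1) \<le> 2 * L * u0"
    using \<open>0 \<le> L\<close> by (intro mult_left_mono) auto
  moreover have "Lu \<le> u0 * D"
    using contact(1) mult_left_mono[OF barrier(2) less_imp_le[OF contact(2)]]
      mult_right_mono[OF contact(3) barrier(5)] by linarith
  moreover have "\<delta> * u0 powr (p - 1) \<le> - ax * u0 powr (p - 1)"
    using \<open>ax \<le> - \<delta>\<close> by (intro mult_right_mono) auto
  ultimately have "\<delta> * u0 powr (p - 1) \<le> (2 * L + D) * u0"
    using pde by (simp add: algebra_simps)
  moreover have "1 < p - 1" using \<open>2 < p\<close> by simp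
  ultimately have "u0 \<le> ((2 * L + D) / \<delta>) powr (1 / (p - 1 - 1))"
    using superlinear_power_le_linear_bound[OF contact(5) barrier(4)] by blast
  then show ?thesis by simp
qed

text \<open>Along the inward normal - \<nabla>\<rho> the Neumann condition kills the derivative of u, while the
  barrier strictly decreases because \<nabla>\<tau> \<bullet> \<nabla>\<rho> > 0; hence u - t w increases into \<Omega>.\<close>

lemma no_contact_at_neumann_boundary:
  fixes u \<rho> \<tau> :: "real^'n \<Rightarrow> real"
  assumes \<rho>: "defining_function \<Omega> \<rho>" and \<tau>: "defining_function Om \<tau>" "Om \<subseteq> \<Omega>"
    and x0: "x0 \<in> frontier \<Omega>" "x0 \<in> frontier Om"
    and u: "open U" "x0 \<in> U" "Ck_on 1 U u" "grad u x0 \<bullet> grad \<rho> x0 = 0"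
    and contact: "0 < t" "0 < j" "\<forall>y\<in>\<Omega>. u y \<le> t * exp_barrier A j \<tau> y" "u x0 = t * exp_barrier A j \<tau> x0"
  shows False
proof -
  note \<rho>D = defining_functionD[OF \<rho>] and \<tau>D = defining_functionD[OF \<tau>(1)]
  define d where "d = - grad \<rho> x0"
  have "0 < grad \<tau> x0 \<bullet> grad \<rho> x0"
  proof (rule inner_grad_defining_functions_pos[OF \<rho>D(1) \<tau>D(1)])
    show "\<rho> x0 = 0" "\<tau> x0 \<le> 0" "grad \<rho> x0 \<noteq> 0" "grad \<tau> x0 \<noteq> 0"
      using x0 \<rho>D(3,4) \<tau>D(3,4) by auto
    show "{y. \<tau> y < 0} \<subseteq> \<Omega>" "\<forall>y\<in>\<Omega>. \<rho> y \<le> 0"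
      using \<tau>(2) \<tau>D(2) \<rho>D(2) by auto
  qed
  then have pos: "0 < grad u x0 \<bullet> d - t * (j * exp (- (j * \<tau> x0)) * (grad \<tau> x0 \<bullet> d))"
    using u(4) contact(1,2) by (simp add: d_def)
  have "((\<lambda>s. u (x0 + s *\<^sub>R d) - t * exp_barrier A j \<tau> (x0 + s *\<^sub>R d)) has_real_derivative
      grad u x0 \<bullet> d - t * (j * exp (- (j * \<tau> x0)) * (grad \<tau> x0 \<bullet> d))) (at 0)"
    by (rule DERIV_diff[OF directional_derivative_grad[OF u(1-3)] DERIV_cmult[OF
          exp_barrier_has_derivative_along[OF directional_derivative_grad[OF open_UNIV UNIV_I \<tau>D(1)]]]])
  then have "grad u x0 \<bullet> d - t * (j * exp (- (j * \<tau> x0)) * (grad \<tau> x0 \<bullet> d)) \<le> 0"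
  proof (rule inward_derivative_nonpos_at_max[OF \<rho>D(1), rotated 3])
    show "\<rho> x0 \<le> 0" "{y. \<rho> y < 0} \<subseteq> \<Omega>" "grad \<rho> x0 \<bullet> d < 0"
      using x0(1) \<rho>D(2-4) by (auto simp: d_def)
    show "\<forall>y\<in>\<Omega>. u y - t * exp_barrier A j \<tau> y \<le> u x0 - t * exp_barrier A j \<tau> x0"
      using contact(3,4) by simp
  qed
  with pos show False by simp
qed

context
  fixes \<Omega> Om :: "(real^'n) set" and a b \<rho> \<tau> :: "real^'n \<Rightarrow> real"
    and p q \<Lambda> B L C T A j \<kappa> D \<delta> :: real
  assumes \<Omega>: "defining_function \<Omega> \<rho>" "\<Omega> \<noteq> {}" "compact (closure \<Omega>)"
    and Om: "defining_function Om \<tau>" "Om \<subseteq> \<Omega>" "frontier \<Omega> \<subseteq> frontier Om" "\<forall>x\<in>Om. a x < 0"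
    and b: "\<forall>x\<in>\<Omega>. \<bar>b x\<bar> \<le> B" "\<Lambda> * (B + 1) \<le> L"
    and pq: "1 < q" "q < 2" "2 < p"
    and barrier: "0 < j" "0 < \<kappa>" "0 < \<delta>" "0 \<le> D"
      "\<forall>x\<in>closure \<Omega>. 1 \<le> exp_barrier A j \<tau> x \<and> exp_barrier A j \<tau> x \<le> A
         \<and> laplacian (exp_barrier A j \<tau>) x \<le> D"
      "\<forall>x\<in>Om. \<kappa> \<le> - laplacian (exp_barrier A j \<tau>) x \<or> a x \<le> - \<delta>"
    and T: "1 \<le> T" "C \<le> T" "(2 * L * A / \<kappa>) powr (1 / (2 - q)) \<le> T"
      "((2 * L + D) / \<delta>) powr (1 / (p - 2)) \<le> T"
begin

lemma contact_ratio_le_threshold: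
  assumes params: "0 \<le> lam" "lam \<le> \<Lambda>" "0 < \<epsilon>" "\<epsilon> \<le> 1"
    and u: "is_solution \<Omega> a b p q lam \<epsilon> u" "\<forall>x\<in>frontier \<Omega>. grad u x \<bullet> grad \<rho> x = 0"
      "\<forall>x\<in>\<Omega> - Om. u x \<le> C"
    and contact: "x0 \<in> closure \<Omega>" "\<forall>x\<in>closure \<Omega>. u x \<le> t * exp_barrier A j \<tau> x"
      "u x0 = t * exp_barrier A j \<tau> x0"
  shows "t \<le> T"
proof (rule ccontr)
  assume "\<not> t \<le> T"
  then have t: "T < t" "0 < t" using T(1) by auto
  let ?w = "exp_barrier A j \<tau>"
  obtain U where U: "open U" "closure \<Omega> \<subseteq> U" "Ck_on 1 U u"
    and u2: "Ck_on 2 \<Omega> u"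
    and pde: "\<forall>x\<in>\<Omega>. - laplacian u x =
       lam * (b x - \<epsilon>) * \<bar>u x + \<epsilon>\<bar> powr (q - 2) * u x + a x * \<bar>u x\<bar> powr (p - 2) * u x"
    using u(1) unfolding is_solution_def by blast
  note \<Omega>D = defining_functionD[OF \<Omega>(1)]
  have w0: "1 \<le> ?w x0" "?w x0 \<le> A" using contact(1) barrier(5) by auto
  have "t \<le> t * ?w x0" "t * ?w x0 \<le> t * A" using w0 t(2) by simp_all
  then have u0: "t \<le> u x0" "u x0 \<le> t * A" "1 \<le> u x0"
    using contact(3) t(1) T(1) by linarith+
  have "x0 \<in> \<Omega> - Om \<or> x0 \<in> frontier \<Omega> \<or> x0 \<in> Om"
    using contact(1) \<Omega>D(5) by (auto simp: frontier_def interior_open)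
  then show False
  proof (elim disjE)
    assume "x0 \<in> \<Omega> - Om"
    then show False using u(3) T(2) t u0 by force
  next
    assume "x0 \<in> frontier \<Omega>"
    show False
    proof (rule no_contact_at_neumann_boundary[OF \<Omega>(1) Om(1,2) \<open>x0 \<in> frontier \<Omega>\<close> _ U(1) _ U(3)])
      show "x0 \<in> frontier Om" "x0 \<in> U" "grad u x0 \<bullet> grad \<rho> x0 = 0"
        using \<open>x0 \<in> frontier \<Omega>\<close> Om(3) U(2) contact(1) u(2) by auto
      show "0 < t" "0 < j" "u x0 = t * ?w x0" "\<forall>y\<in>\<Omega>. u y \<le> t * ?w y"
        using t barrier(1) contact closure_subset by auto
    qed
  next
    assume "x0 \<in> Om"
    then have "x0 \<in> \<Omega>" using Om(2) by blast
    have w2: "Ck_on 2 UNIV ?w"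
      by (rule Ck_on_2_exp_barrier[OF defining_functionD(1)[OF Om(1)]])
    have lap: "laplacian u x0 \<le> t * laplacian ?w x0"
      by (rule laplacian_le_at_contact_point[OF \<Omega>D(5) \<open>x0 \<in> \<Omega>\<close> u2 Ck_on_subset[OF w2 subset_UNIV]])
        (use contact closure_subset in auto)
    have "u x0 \<le> max ((2 * L * A / \<kappa>) powr (1 / (2 - q))) (((2 * L + D) / \<delta>) powr (1 / (p - 2)))"
    proof (rule contact_value_bound[OF _ lap t(2) u0])
      show "- laplacian u x0 \<le> 2 * L * u x0 powr (q - 1) + a x0 * u x0 powr (p - 1)"
        using pde \<open>x0 \<in> \<Omega>\<close> reaction_term_le[OF params b(1)[rule_format, OF \<open>x0 \<in> \<Omega>\<close>] b(2) u0(3) pq(1,2)]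
        by simp
      show "\<kappa> \<le> - laplacian ?w x0 \<or> a x0 \<le> - \<delta>" "laplacian ?w x0 \<le> D"
        using barrier(5,6) \<open>x0 \<in> Om\<close> contact(1) by auto
      show "0 \<le> L" using params(1,2) b \<open>x0 \<in> \<Omega>\<close> by (smt (verit) mult_nonneg_nonneg)
    qed (use barrier(2-4) Om(4) \<open>x0 \<in> Om\<close> pq in auto)
    then show False using T(3,4) t(1) u0(1) by linarith
  qed
qed

lemma solution_le_multiple_of_exp_barrier:
  assumes params: "0 \<le> lam" "lam \<le> \<Lambda>" "0 < \<epsilon>" "\<epsilon> \<le> 1"
    and u: "is_solution \<Omega> a b p q lam \<epsilon> u" "\<forall>x\<in>frontier \<Omega>. grad u x \<bullet> grad \<rho> x = 0"
      "\<forall>x\<in>\<Omega> - Om. u x \<le> C"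
  shows "\<forall>x\<in>closure \<Omega>. u x \<le> T * A"
proof -
  let ?w = "exp_barrier A j \<tau>"
  obtain x0 t where contact: "x0 \<in> closure \<Omega>" "\<forall>x\<in>closure \<Omega>. u x \<le> t * ?w x" "u x0 = t * ?w x0"
  proof (rule continuous_ratio_attains_max[OF \<Omega>(3)])
    show "closure \<Omega> \<noteq> {}" using \<Omega>(2) by simp
    obtain U where "closure \<Omega> \<subseteq> U" "Ck_on 1 U u"
      using u(1) unfolding is_solution_def by blast
    then show "continuous_on (closure \<Omega>) u"
      using Ck_on_1_D(1) continuous_on_subset by blast
    have "Ck_on 2 UNIV ?w"
      by (rule Ck_on_2_exp_barrier[OF defining_functionD(1)[OF Om(1)]])
    then show "continuous_on (closure \<Omega>) ?w"
      using Ck_on_1_D(1)[OF Ck_on_2_D(1)] continuous_on_subset by blast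
    show "\<forall>x\<in>closure \<Omega>. 0 < ?w x" using barrier(5) by force
  qed
  have "t \<le> T" by (rule contact_ratio_le_threshold[OF params u contact])
  show ?thesis
  proof
    fix x assume x: "x \<in> closure \<Omega>"
    have "u x \<le> t * ?w x" using contact(2) x by blast
    also have "\<dots> \<le> T * ?w x" using \<open>t \<le> T\<close> barrier(5) x by (intro mult_right_mono) force+
    also have "\<dots> \<le> T * A" using T(1) barrier(5) x by (intro mult_left_mono) auto
    finally show "u x \<le> T * A" .
  qed
qed

end

lemma solutions_uniformly_bounded:
  fixes \<Omega> Om :: "(real^'n) set" and a b \<rho> \<tau> :: "real^'n \<Rightarrow> real"
  assumes \<Omega>: "defining_function \<Omega> \<rho>" "\<Omega> \<noteq> {}" "bounded \<Omega>"
    and Om: "defining_function Om \<tau>" "bounded Om" "Om \<subseteq> \<Omega>" "frontier \<Omega> \<subseteq> frontier Om"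
    and a: "continuous_on (closure \<Omega>) a" "\<forall>x\<in>Om. a x < 0"
    and b: "\<forall>x\<in>\<Omega>. \<bar>b x\<bar> \<le> B"
    and pq: "1 < q" "q < 2" "2 < p"
  shows "\<exists>C2>0. \<forall>u lam \<epsilon>. 0 \<le> lam \<and> lam \<le> \<Lambda> \<and> 0 < \<epsilon> \<and> \<epsilon> \<le> 1 \<and> is_solution \<Omega> a b p q lam \<epsilon> u
      \<and> (\<forall>x\<in>frontier \<Omega>. grad u x \<bullet> grad \<rho> x = 0) \<and> (\<forall>x\<in>\<Omega> - Om. u x \<le> C)
      \<longrightarrow> (\<forall>x\<in>closure \<Omega>. u x \<le> C2)"
proof -
  have "compact (closure \<Omega>)" using \<Omega>(3) by simp
  obtain j A \<kappa> D \<delta> where barrier: "0 < j" "0 < \<kappa>" "0 < \<delta>" "0 \<le> D"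
      "\<forall>x\<in>closure \<Omega>. 1 \<le> exp_barrier A j \<tau> x \<and> exp_barrier A j \<tau> x \<le> A
         \<and> laplacian (exp_barrier A j \<tau>) x \<le> D"
      "\<forall>x\<in>Om. \<kappa> \<le> - laplacian (exp_barrier A j \<tau>) x \<or> a x \<le> - \<delta>"
    by (rule exp_barrier_exists[OF \<open>compact (closure \<Omega>)\<close> closure_mono[OF Om(3)] Om(1,2) a])
  define L where "L = \<Lambda> * (B + 1)"
  define T where "T = max (max 1 C) (max ((2 * L * A / \<kappa>) powr (1 / (2 - q)))
      (((2 * L + D) / \<delta>) powr (1 / (p - 2))))"
  have T: "1 \<le> T" "C \<le> T" "(2 * L * A / \<kappa>) powr (1 / (2 - q)) \<le> T"
    "((2 * L + D) / \<delta>) powr (1 / (p - 2)) \<le> T"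
    unfolding T_def by auto
  obtain x where "x \<in> closure \<Omega>" using \<Omega>(2) closure_subset by blast
  then have "1 \<le> A" using barrier(5) by force
  have L: "\<Lambda> * (B + 1) \<le> L" by (simp add: L_def)
  show ?thesis
  proof (intro exI[of _ "T * A"] conjI allI impI)
    show "0 < T * A" using T(1) \<open>1 \<le> A\<close> by simp
    fix u lam \<epsilon>
    assume "0 \<le> lam \<and> lam \<le> \<Lambda> \<and> 0 < \<epsilon> \<and> \<epsilon> \<le> 1 \<and> is_solution \<Omega> a b p q lam \<epsilon> u
      \<and> (\<forall>x\<in>frontier \<Omega>. grad u x \<bullet> grad \<rho> x = 0) \<and> (\<forall>x\<in>\<Omega> - Om. u x \<le> C)"
    then show "\<forall>x\<in>closure \<Omega>. u x \<le> T * A"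
      using solution_le_multiple_of_exp_barrier[OF \<Omega>(1,2) \<open>compact (closure \<Omega>)\<close> Om(1,3,4) a(2) b L
          pq barrier T]
      by blast
  qed
qed

theorem proposition6p3:
  fixes \<Omega> :: "(real^'n) set" and a b :: "real^'n \<Rightarrow> real"
    and p q \<alpha> \<Lambda> C1 :: real
  assumes N: "CARD('n) \<ge> 2"
    and dom: "smooth_bounded_domain \<Omega>"
    and pq: "1 < q" "q < 2" "2 < p"
    and alpha: "0 < \<alpha>" "\<alpha> < 1"
    and ha: "holder_on \<alpha> (closure \<Omega>) a" and hb: "holder_on \<alpha> (closure \<Omega>) b"
    and plus_dom: "smooth_bounded_domain {x\<in>\<Omega>. a x > 0}"
    and minus_dom: "smooth_bounded_domain {x\<in>\<Omega>. a x < 0}"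
    and plus_cl: "closure {x\<in>\<Omega>. a x > 0} \<subseteq> \<Omega>"
    and union: "closure {x\<in>\<Omega>. a x > 0} \<union> {x\<in>\<Omega>. a x < 0} = \<Omega>"
    and Lam: "\<Lambda> > 0"
    and C1: "C1 > 0"
    and bound_plus: "\<And>u lam \<epsilon>. \<lbrakk>0 \<le> lam; lam \<le> \<Lambda>; 0 < \<epsilon>; \<epsilon> \<le> 1;
         nontrivial_nonneg_solution \<Omega> a b p q lam \<epsilon> u\<rbrakk> \<Longrightarrow>
         \<forall>x\<in>closure {x\<in>\<Omega>. a x > 0}. \<bar>u x\<bar> \<le> C1"
  shows "\<exists>C2>0. \<forall>u lam \<epsilon>. 0 \<le> lam \<and> lam \<le> \<Lambda> \<and> 0 < \<epsilon> \<and> \<epsilon> \<le> 1 \<and>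
            nontrivial_nonneg_solution \<Omega> a b p q lam \<epsilon> u \<longrightarrow>
            (\<forall>x\<in>closure \<Omega>. \<bar>u x\<bar> \<le> C2)"
proof -
  define Om where "Om = {x\<in>\<Omega>. a x < 0}"
  define \<rho> where "\<rho> = (SOME \<rho>. defining_function \<Omega> \<rho>)"
  have \<Omega>: "\<Omega> \<noteq> {}" "bounded \<Omega>" "\<exists>\<rho>. defining_function \<Omega> \<rho>"
    using dom unfolding smooth_bounded_domain_def by auto
  have \<rho>: "defining_function \<Omega> \<rho>"
    unfolding \<rho>_def using \<Omega>(3) by (rule someI_ex)
  obtain \<tau> where \<tau>: "defining_function Om \<tau>" "bounded Om"
    using minus_dom unfolding smooth_bounded_domain_def Om_def by blast
  have Om: "Om \<subseteq> \<Omega>" "\<forall>x\<in>Om. a x < 0" "\<Omega> - Om \<subseteq> closure {x\<in>\<Omega>. a x > 0}"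
    using union unfolding Om_def by auto
  have "frontier \<Omega> \<subseteq> frontier Om"
    unfolding Om_def by (rule frontier_subset_frontier_of_cover[OF defining_functionD(5)[OF \<rho>] plus_cl union])
  have "bounded (b ` closure \<Omega>)" using hb unfolding holder_on_def by blast
  then obtain B where "\<forall>x\<in>\<Omega>. \<bar>b x\<bar> \<le> B" using closure_subset unfolding bounded_real by blast
  obtain C2 where C2: "0 < C2" "\<forall>u lam \<epsilon>. 0 \<le> lam \<and> lam \<le> \<Lambda> \<and> 0 < \<epsilon> \<and> \<epsilon> \<le> 1
      \<and> is_solution \<Omega> a b p q lam \<epsilon> u \<and> (\<forall>x\<in>frontier \<Omega>. grad u x \<bullet> grad \<rho> x = 0)
      \<and> (\<forall>x\<in>\<Omega> - Om. u x \<le> C1) \<longrightarrow> (\<forall>x\<in>closure \<Omega>. u x \<le> C2)"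
    using solutions_uniformly_bounded[OF \<rho> \<Omega>(1,2) \<tau> Om(1) \<open>frontier \<Omega> \<subseteq> frontier Om\<close>
        holder_on_imp_continuous_on[OF ha alpha(1)] Om(2) \<open>\<forall>x\<in>\<Omega>. \<bar>b x\<bar> \<le> B\<close> pq] by blast
  show ?thesis
  proof (intro exI[of _ C2] conjI allI impI ballI)
    fix u lam \<epsilon> x
    assume "0 \<le> lam \<and> lam \<le> \<Lambda> \<and> 0 < \<epsilon> \<and> \<epsilon> \<le> 1 \<and> nontrivial_nonneg_solution \<Omega> a b p q lam \<epsilon> u"
      and x: "x \<in> closure \<Omega>"
    then have params: "0 \<le> lam" "lam \<le> \<Lambda>" "0 < \<epsilon>" "\<epsilon> \<le> 1"
      and nonneg_sol: "nontrivial_nonneg_solution \<Omega> a b p q lam \<epsilon> u" by auto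
    then have sol: "is_solution \<Omega> a b p q lam \<epsilon> u" and "0 \<le> u x"
      using x unfolding nontrivial_nonneg_solution_def by auto
    have "\<forall>y\<in>frontier \<Omega>. grad u y \<bullet> grad \<rho> y = 0"
      using sol normal_derivative_eq_0_iff unfolding is_solution_def \<rho>_def by blast
    moreover have "\<forall>y\<in>\<Omega> - Om. u y \<le> C1"
      using bound_plus[OF params nonneg_sol] Om(3) by fastforce
    ultimately have "u x \<le> C2" using C2(2) params sol x by blast
    with \<open>0 \<le> u x\<close> show "\<bar>u x\<bar> \<le> C2" by simp
  qed (fact C2(1))
qed

end
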